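(* Let $k\ge1$, let $c\in\mathcal{S}_k^\alpha\setminus\{\mathbf{0}\}$, and let $s_i^k$ be the $i$-th row of $G_k^\alpha$, $i\in\{1,\dots,k\}$. Then, for every $i\in\{1,\dots,k\}$, $c$ is equal to $\gamma^{\nu(c)}s_i^k$ up to a permutation of coordinates.
   Context: Let $R$ be a finite commutative chain ring with maximal ideal $\langle\gamma\rangle$, nilpotency index $s$ and residue field $R/\langle\gamma\rangle\cong\mathbb{F}_q$. Fix coset representatives $T=\{e_0,\dots,e_{q-1}\}$ with $e_0=0,e_1=1$, ordered $e_0<\dots<e_{q-1}$; each $r\in R$ is uniquely $\sum_{i=0}^{s-1}r_i\gamma^i$, $r_i\in T$; order $R$ by $x>y$ iff $x_i>y_i$ in $T$ for the largest $i$ with $x_i\neq y_i$; list $R=\{\rho_0,\dots,\rho_{q^s-1}\}$ increasingly. $\mathbf{a}^{(m)}$ is the constant vector of length $m$. Define $G_1^\alpha=(\rho_0\ \cdots\ \rho_{q^s-1})$ and, for $k>1$, $G_k^\alpha$ as the $k\times q^{sk}$ matrix of $q^s$ column blocks, the $j$-th having first row $\boldsymbol{\rho_j}^{(q^{s(k-1)})}$ and $G_{k-1}^\alpha$ below. $\mathcal{S}_k^\alpha$ is the $R$-submodule of $R^{q^{sk}}$ generated by the rows of $G_k^\alpha$. Valuation: for $x\in R\setminus\{0\}$, $\nu(x)$ is the largest $m$ with $x=\gamma^m\beta$, $\beta$ a unit; $\nu(0)=\infty$; for $x\in R^n$, $\nu(x)=\min_i\nu(x_i)$. *)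

theory Defs
  imports Main "HOL-Library.Extended_Nat" "HOL-Library.Multiset"
begin

definition is_ideal :: "'a::comm_ring_1 set \<Rightarrow> bool" where
  "is_ideal I \<longleftrightarrow> 0 \<in> I \<and> (\<forall>x\<in>I. \<forall>y\<in>I. x + y \<in> I) \<and> (\<forall>r. \<forall>x\<in>I. r * x \<in> I)"

definition maximal_ideal :: "'a::comm_ring_1 set \<Rightarrow> bool" where
  "maximal_ideal I \<longleftrightarrow> is_ideal I \<and> I \<noteq> UNIV \<and>
     (\<forall>J. is_ideal J \<and> I \<subseteq> J \<longrightarrow> J = I \<or> J = UNIV)"

definition pideal :: "'a::comm_ring_1 \<Rightarrow> 'a set" where
  "pideal g = {g * r | r. True}"

text \<open>T = [e_0, ..., e_{q-1}] is a list of coset representatives of R/<gamma>,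
  ordered by list position, with e_0 = 0 and e_1 = 1.\<close>
definition coset_reps :: "'a::comm_ring_1 \<Rightarrow> 'a list \<Rightarrow> bool" where
  "coset_reps g T \<longleftrightarrow>
     (\<forall>i<length T. \<forall>j<length T. i \<noteq> j \<longrightarrow> T ! i - T ! j \<notin> pideal g) \<and>
     (\<forall>x. \<exists>t\<in>set T. x - t \<in> pideal g) \<and>
     T ! 0 = 0 \<and> T ! 1 = 1"

definition digits :: "'a::comm_ring_1 \<Rightarrow> nat \<Rightarrow> 'a list \<Rightarrow> 'a \<Rightarrow> 'a list" where
  "digits g s T r = (THE ds. length ds = s \<and> set ds \<subseteq> set T \<and>
                         r = (\<Sum>i<s. ds ! i * g ^ i))"

definition tidx :: "'a list \<Rightarrow> 'a \<Rightarrow> nat" where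
  "tidx T t = (THE i. i < length T \<and> T ! i = t)"

definition ring_less :: "'a::comm_ring_1 \<Rightarrow> nat \<Rightarrow> 'a list \<Rightarrow> 'a \<Rightarrow> 'a \<Rightarrow> bool" where
  "ring_less g s T x y \<longleftrightarrow>
     (let dx = digits g s T x; dy = digits g s T y in
      \<exists>i<s. dx ! i \<noteq> dy ! i \<and> tidx T (dx ! i) < tidx T (dy ! i) \<and>
            (\<forall>j. i < j \<and> j < s \<longrightarrow> dx ! j = dy ! j))"

definition rho :: "'a::comm_ring_1 \<Rightarrow> nat \<Rightarrow> 'a list \<Rightarrow> nat \<Rightarrow> 'a" where
  "rho g s T j = (THE r. card {y. ring_less g s T y r} = j)"

definition rho_list :: "'a::comm_ring_1 \<Rightarrow> nat \<Rightarrow> 'a list \<Rightarrow> 'a list" where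
  "rho_list g s T = map (rho g s T) [0..<length T ^ s]"

text \<open>Rows of G_k^alpha (row i of the paper is element i-1 of the list).\<close>
fun Gmat :: "'a::comm_ring_1 \<Rightarrow> nat \<Rightarrow> 'a list \<Rightarrow> nat \<Rightarrow> 'a list list" where
  "Gmat g s T 0 = []"
| "Gmat g s T (Suc 0) = [rho_list g s T]"
| "Gmat g s T (Suc (Suc k)) =
     concat (map (\<lambda>r. replicate (length T ^ (s * Suc k)) r) (rho_list g s T))
     # map (\<lambda>row. concat (replicate (length T ^ s) row)) (Gmat g s T (Suc k))"

definition S_mod :: "'a::comm_ring_1 \<Rightarrow> nat \<Rightarrow> 'a list \<Rightarrow> nat \<Rightarrow> 'a list set" where
  "S_mod g s T k = {map (\<lambda>p. \<Sum>i<k. a i * (Gmat g s T k ! i) ! p) [0..<length T ^ (s * k)]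
                    | a. True}"

definition val :: "'a::comm_ring_1 \<Rightarrow> 'a \<Rightarrow> enat" where
  "val g x = (if x = 0 then \<infinity> else enat (GREATEST m. \<exists>b. b dvd 1 \<and> x = g ^ m * b))"

definition vval :: "'a::comm_ring_1 \<Rightarrow> 'a list \<Rightarrow> enat" where
  "vval g c = Min (val g ` set c)"

end

theory Submission
  imports Defs
begin

(* Write c = a_1 s_1 + ... + a_k s_k.  The entries of c are the values of the linear form
   x |-> a_1 x_1 + ... + a_k x_k at the columns of G_k, and these columns run through R^k exactly
   once each: they are built by the same recursion as R^k = R x R^(k-1), and there are |R|^k of
   them.  Every nonempty fibre of a linear form is a translate of its kernel, so the multiset of
   values of a form on R^k depends only on its image, which is an ideal.  For c this ideal is
   nonzero, so in the chain ring R it is <gamma^n> with n = nu(c); it is also the image of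
   x |-> gamma^n x_i, whose values are the entries of gamma^n s_i. *)

section \<open>Value multisets of linear forms\<close>

lemma count_image_mset_mset_set:
  "finite A \<Longrightarrow> count (image_mset f (mset_set A)) y = card {x\<in>A. f x = y}"
  by (simp add: count_image_mset Int_def conj_commute)

lemma card_eq_card_image_mult_fibre:
  assumes "finite A" and "\<forall>y\<in>f ` A. card {x\<in>A. f x = y} = m"
  shows "card A = card (f ` A) * m"
proof -
  have "card A = card (\<Union>y\<in>f ` A. {x\<in>A. f x = y})"
    by (rule arg_cong[where f = card]) auto
  also have "\<dots> = (\<Sum>y\<in>f ` A. card {x\<in>A. f x = y})"
    using assms(1) by (intro card_UN_disjoint) auto
  finally have "card A = (\<Sum>y\<in>f ` A. card {x\<in>A. f x = y})" .
  then show ?thesis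
    using assms(2) by simp
qed

lemma image_mset_eq_if_constant_fibres:
  assumes "finite A" and "f ` A = h ` A"
    and "\<forall>y\<in>f ` A. card {x\<in>A. f x = y} = m" and "\<forall>y\<in>h ` A. card {x\<in>A. h x = y} = n"
  shows "image_mset f (mset_set A) = image_mset h (mset_set A)"
proof (cases "A = {}")
  case True
  then show ?thesis
    by (simp only: mset_set.empty image_mset_empty)
next
  case False
  then have "card (f ` A) > 0"
    using assms(1) by (simp add: card_gt_0_iff)
  moreover have "card A = card (f ` A) * m"
    using assms(1,3) by (rule card_eq_card_image_mult_fibre)
  moreover have "card A = card (f ` A) * n"
    unfolding assms(2) using assms(1,4) by (rule card_eq_card_image_mult_fibre)
  ultimately have "m = n"
    by (metis mult_left_cancel not_gr0)
  have "count (image_mset f (mset_set A)) y = count (image_mset h (mset_set A)) y" for y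
  proof (cases "y \<in> f ` A")
    case True
    then have "card {x\<in>A. f x = y} = m" "card {x\<in>A. h x = y} = n"
      using assms(2-4) by auto
    then show ?thesis
      using assms(1) \<open>m = n\<close> by (simp add: count_image_mset_mset_set)
  next
    case False
    then have "{x\<in>A. f x = y} = {}" "{x\<in>A. h x = y} = {}"
      using assms(2) by blast+
    then show ?thesis
      by (simp only: count_image_mset_mset_set[OF assms(1)])
  qed
  then show ?thesis
    by (rule multiset_eqI)
qed

definition lin_form :: "(nat \<Rightarrow> 'a::comm_ring_1) \<Rightarrow> 'a list \<Rightarrow> 'a" where
  "lin_form a xs = (\<Sum>i<length xs. a i * xs ! i)"

lemma lin_form_add:
  "length xs = length ys \<Longrightarrow> lin_form a (map2 (+) xs ys) = lin_form a xs + lin_form a ys"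
  by (simp add: lin_form_def distrib_left sum.distrib)

lemma lin_form_diff:
  "length xs = length ys \<Longrightarrow> lin_form a (map2 (-) xs ys) = lin_form a xs - lin_form a ys"
  by (simp add: lin_form_def right_diff_distrib sum_subtractf)

lemma lin_form_scale: "lin_form a (map (\<lambda>x. r * x) xs) = r * lin_form a xs"
  by (simp add: lin_form_def sum_distrib_left ac_simps)

lemma is_ideal_lin_form_image: "is_ideal (lin_form a ` {xs. length xs = k})"
  unfolding is_ideal_def
proof (intro conjI ballI allI)
  show "0 \<in> lin_form a ` {xs. length xs = k}"
    by (rule image_eqI[of _ _ "replicate k 0"]) (simp_all add: lin_form_def)
next
  fix x y assume "x \<in> lin_form a ` {xs. length xs = k}" "y \<in> lin_form a ` {xs. length xs = k}"
  then obtain xs ys where "length xs = k" "length ys = k" "x = lin_form a xs" "y = lin_form a ys"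
    by blast
  then show "x + y \<in> lin_form a ` {xs. length xs = k}"
    by (intro image_eqI[of _ _ "map2 (+) xs ys"]) (simp_all add: lin_form_add)
next
  fix r x assume "x \<in> lin_form a ` {xs. length xs = k}"
  then obtain xs where "length xs = k" "x = lin_form a xs"
    by blast
  then show "r * x \<in> lin_form a ` {xs. length xs = k}"
    by (intro image_eqI[of _ _ "map (\<lambda>x. r * x) xs"]) (simp_all add: lin_form_scale)
qed

lemma card_lin_form_fibre:
  assumes "y \<in> lin_form a ` {xs. length xs = k}"
  shows "card {xs\<in>{xs. length xs = k}. lin_form a xs = y}
       = card {xs\<in>{xs. length xs = k}. lin_form a xs = 0}"
proof -
  obtain zs where zs: "length zs = k" "lin_form a zs = y"
    using assms by blast
  have "bij_betw (\<lambda>xs. map2 (-) xs zs)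
      {xs\<in>{xs. length xs = k}. lin_form a xs = y} {xs\<in>{xs. length xs = k}. lin_form a xs = 0}"
  proof (rule bij_betw_byWitness[of _ "\<lambda>xs. map2 (+) xs zs"])
    show "\<forall>xs\<in>{xs\<in>{xs. length xs = k}. lin_form a xs = y}. map2 (+) (map2 (-) xs zs) zs = xs"
      using zs(1) by (simp add: list_eq_iff_nth_eq)
    show "\<forall>xs\<in>{xs\<in>{xs. length xs = k}. lin_form a xs = 0}. map2 (-) (map2 (+) xs zs) zs = xs"
      using zs(1) by (simp add: list_eq_iff_nth_eq)
    show "(\<lambda>xs. map2 (-) xs zs) ` {xs\<in>{xs. length xs = k}. lin_form a xs = y}
        \<subseteq> {xs\<in>{xs. length xs = k}. lin_form a xs = 0}"
      using zs by (intro image_subsetI) (simp add: lin_form_diff)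
    show "(\<lambda>xs. map2 (+) xs zs) ` {xs\<in>{xs. length xs = k}. lin_form a xs = 0}
        \<subseteq> {xs\<in>{xs. length xs = k}. lin_form a xs = y}"
      using zs by (intro image_subsetI) (simp add: lin_form_add)
  qed
  then show ?thesis
    by (rule bij_betw_same_card)
qed

lemma finite_lists_length: "finite {xs :: 'a::finite list. length xs = k}"
  using finite_lists_length_eq[of "UNIV :: 'a set" k] by simp

lemma lin_form_values_eq:
  fixes a b :: "nat \<Rightarrow> 'a::{comm_ring_1,finite}"
  assumes "lin_form a ` {xs. length xs = k} = lin_form b ` {xs. length xs = k}"
  shows "image_mset (lin_form a) (mset_set {xs. length xs = k})
       = image_mset (lin_form b) (mset_set {xs. length xs = k})"
proof -
  have "\<forall>y\<in>lin_form c ` {xs. length xs = k}. card {xs\<in>{xs. length xs = k}. lin_form c xs = y}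
      = card {xs\<in>{xs. length xs = k}. lin_form c xs = 0}" for c :: "nat \<Rightarrow> 'a"
    by (intro ballI card_lin_form_fibre)
  then show ?thesis
    by (intro image_mset_eq_if_constant_fibres[OF finite_lists_length assms])
qed

section \<open>Chain rings\<close>

lemma pideal_iff: "y \<in> pideal x \<longleftrightarrow> (\<exists>r. y = x * r)"
  unfolding pideal_def by auto

lemma mult_in_pideal: "x * r \<in> pideal x"
  unfolding pideal_def by auto

lemma is_ideal_pideal: "is_ideal (pideal x)"
  unfolding is_ideal_def
proof (intro conjI ballI allI)
  show "0 \<in> pideal x"
    using mult_in_pideal[of x 0] by simp
  show "a + b \<in> pideal x" if ab: "a \<in> pideal x" "b \<in> pideal x" for a b
  proof -
    obtain a' b' where "a = x * a'" "b = x * b'"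
      using ab by (auto simp: pideal_iff)
    then have "a + b = x * (a' + b')"
      by (simp add: distrib_left)
    then show ?thesis
      by (simp add: mult_in_pideal)
  qed
  show "r * a \<in> pideal x" if a: "a \<in> pideal x" for r a
  proof -
    obtain a' where "a = x * a'"
      using a by (auto simp: pideal_iff)
    then have "r * a = x * (r * a')"
      by (simp add: mult.left_commute)
    then show ?thesis
      by (simp add: mult_in_pideal)
  qed
qed

lemma unit_mult_eq_zero:
  fixes a w :: "'a::comm_ring_1"
  assumes "w dvd 1" and "a * w = 0"
  shows "a = 0"
proof -
  obtain w' where "1 = w * w'"
    using assms(1) by (auto simp: dvd_def)
  then have "a = (a * w) * w'"
    by (metis mult.assoc mult.right_neutral)
  then show ?thesis
    using assms(2) by simp
qed

locale chain_ring =
  fixes g :: "'a::{comm_ring_1,finite}" and s :: nat and T :: "'a list"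
  assumes chain: "\<forall>I J :: 'a set. is_ideal I \<and> is_ideal J \<longrightarrow> I \<subseteq> J \<or> J \<subseteq> I"
    and maxid: "maximal_ideal (pideal g)"
    and nil: "g ^ s = 0" and nil': "g ^ (s - 1) \<noteq> 0"
    and reps: "coset_reps g T"
begin

lemma unit_if_notin_pideal:
  assumes "x \<notin> pideal g"
  shows "x dvd 1"
proof -
  have "x \<in> pideal x"
    using mult_in_pideal[of x 1] by simp
  then have "pideal g \<subseteq> pideal x"
    using chain is_ideal_pideal assms by blast
  then have "pideal x = UNIV"
    using maxid is_ideal_pideal assms \<open>x \<in> pideal x\<close> unfolding maximal_ideal_def by blast
  then show ?thesis
    by (metis UNIV_I dvdI pideal_iff)
qed

lemma notin_pideal_if_unit:
  assumes "u dvd 1"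
  shows "u \<notin> pideal g"
proof
  assume "u \<in> pideal g"
  then have "pideal g = UNIV"
    using assms is_ideal_pideal[of g] unfolding is_ideal_def
    by (metis UNIV_eq_I dvd_def mult.commute mult.right_neutral)
  then show False
    using maxid unfolding maximal_ideal_def by blast
qed

lemma unit_add_pideal:
  assumes "u dvd 1" and "z \<in> pideal g"
  shows "(u + z) dvd 1"
proof (rule ccontr)
  assume "\<not> (u + z) dvd 1"
  then have "u + z \<in> pideal g"
    using unit_if_notin_pideal by blast
  then have "u + z - z \<in> pideal g"
    using assms(2) is_ideal_pideal[of g] unfolding is_ideal_def
    by (metis add_uminus_conv_diff mult_minus1)
  then show False
    using notin_pideal_if_unit assms(1) by simp
qed

lemma power_ne_zero_below:
  assumes "m < s"
  shows "g ^ m \<noteq> 0"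
proof
  assume "g ^ m = 0"
  have "g ^ (s - 1) = g ^ m * g ^ (s - 1 - m)"
    using assms by (simp flip: power_add)
  then show False
    using nil' \<open>g ^ m = 0\<close> by simp
qed

lemma power_eq_zero_above: "s \<le> m \<Longrightarrow> g ^ m = 0"
  using nil by (metis le_add_diff_inverse mult_zero_left power_add)

lemma unit_factorization:
  assumes "x \<noteq> 0"
  obtains v u where "u dvd 1" and "x = g ^ v * u"
proof -
  define S where "S = {j. \<exists>y. x = g ^ j * y}"
  have "S \<subseteq> {..<s}"
  proof
    fix j assume "j \<in> S"
    then obtain y where "x = g ^ j * y"
      unfolding S_def by blast
    then show "j \<in> {..<s}"
      using assms power_eq_zero_above[of j] by (cases "j < s") auto
  qed
  then have S: "finite S" "0 \<in> S"
    unfolding S_def by (auto intro: finite_subset)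
  then obtain y where y: "x = g ^ Max S * y"
    using Max_in unfolding S_def by blast
  have "y \<notin> pideal g"
  proof
    assume "y \<in> pideal g"
    then obtain z where "y = g * z"
      by (auto simp: pideal_iff)
    then have "x = g ^ Suc (Max S) * z"
      using y by (simp add: ac_simps)
    then have "Suc (Max S) \<in> S"
      unfolding S_def by blast
    then show False
      using Max_ge[OF S(1)] by fastforce
  qed
  then show ?thesis
    using that y unit_if_notin_pideal by blast
qed

lemma exponent_le_if_unit_factorization:
  assumes "x \<noteq> 0" and "u dvd 1" and "x = g ^ v * u" and "x = g ^ j * r"
  shows "j \<le> v"
proof (rule ccontr)
  assume "\<not> j \<le> v"
  then obtain e where e: "j = v + Suc e"
    by (metis add_Suc_right less_imp_Suc_add not_le)
  have "g ^ v * (u - g * (g ^ e * r)) = 0"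
    using assms(3,4) e by (simp add: right_diff_distrib power_add ac_simps)
  moreover have "(u - g * (g ^ e * r)) dvd 1"
    using unit_add_pideal[OF assms(2) mult_in_pideal[of g "- (g ^ e * r)"]] by simp
  ultimately have "g ^ v = 0"
    using unit_mult_eq_zero by blast
  then show False
    using assms(1,3) by simp
qed

lemma val_unit_factorization:
  assumes "u dvd 1" and "x = g ^ v * u" and "x \<noteq> 0"
  shows "val g x = enat v"
proof -
  have "(GREATEST m. \<exists>b. b dvd 1 \<and> x = g ^ m * b) = v"
    by (rule Greatest_equality) (use assms exponent_le_if_unit_factorization in blast)+
  then show ?thesis
    using assms(3) unfolding val_def by simp
qed

text \<open>The generator is \<open>g ^ n\<close> for the least \<open>n\<close> such that \<open>I\<close> contains a nonzero
  multiple of \<open>g ^ n\<close> by a unit.\<close>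
lemma ideal_eq_pideal_power:
  assumes "is_ideal I" and "I \<noteq> {0}"
  obtains n where "I = pideal (g ^ n)" and "g ^ n \<noteq> 0"
proof -
  define P where "P v \<longleftrightarrow> (\<exists>u. u dvd 1 \<and> g ^ v * u \<in> I - {0})" for v
  have "0 \<in> I"
    using assms(1) unfolding is_ideal_def by blast
  then have "\<exists>x\<in>I. x \<noteq> 0"
    using assms(2) by (metis insertI1 subsetI subset_antisym singletonD)
  then obtain x where x: "x \<in> I" "x \<noteq> 0"
    by blast
  obtain v u where "u dvd 1" "x = g ^ v * u"
    using unit_factorization[OF x(2)] .
  then have "P v"
    unfolding P_def using x by auto
  then have "\<exists>v. P v"
    by blast
  define n where "n = (LEAST v. P v)"
  obtain u where u: "u dvd 1" "g ^ n * u \<in> I - {0}"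
    using LeastI_ex[OF \<open>\<exists>v. P v\<close>] unfolding P_def n_def by blast
  obtain w where "u * w = 1"
    using u(1) by (elim dvdE) simp
  then have "w * (g ^ n * u) = g ^ n"
    by (metis mult.left_commute mult.right_neutral)
  moreover have "w * (g ^ n * u) \<in> I"
    using u(2) assms(1) unfolding is_ideal_def by blast
  ultimately have "g ^ n \<in> I"
    by simp
  then have "pideal (g ^ n) \<subseteq> I"
    using assms(1) unfolding is_ideal_def by (auto simp: pideal_iff mult.commute)
  moreover have "y \<in> pideal (g ^ n)" if "y \<in> I" for y
  proof (cases "y = 0")
    case True
    then show ?thesis
      using mult_in_pideal[of _ 0] by simp
  next
    case False
    obtain v b where vb: "b dvd 1" "y = g ^ v * b"
      using unit_factorization[OF False] .
    then have "P v"
      unfolding P_def using False \<open>y \<in> I\<close> by blast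
    then have "n \<le> v"
      unfolding n_def by (rule Least_le)
    then have "g ^ v = g ^ n * g ^ (v - n)"
      by (simp flip: power_add)
    then have "y = g ^ n * (g ^ (v - n) * b)"
      using vb by (simp add: mult.assoc)
    then show ?thesis
      by (simp add: mult_in_pideal)
  qed
  moreover have "g ^ n \<noteq> 0"
    using u(2) by auto
  ultimately show ?thesis
    using that by blast
qed

lemma vval_eq_if_set_eq_pideal:
  assumes "set c = pideal (g ^ n)" and "g ^ n \<noteq> 0"
  shows "vval g c = enat n"
  unfolding vval_def
proof (rule Min_eqI)
  show "finite (val g ` set c)"
    by simp
  show "enat n \<in> val g ` set c"
    using assms val_unit_factorization[of 1 "g ^ n" n] mult_in_pideal[of "g ^ n" 1] by force
  fix e assume "e \<in> val g ` set c"
  then obtain y where y: "y \<in> pideal (g ^ n)" "e = val g y"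
    using assms(1) by auto
  show "enat n \<le> e"
  proof (cases "y = 0")
    case True
    then show ?thesis
      using y unfolding val_def by simp
  next
    case False
    obtain v b where vb: "b dvd 1" "y = g ^ v * b"
      using unit_factorization[OF False] .
    moreover obtain r where "y = g ^ n * r"
      using y(1) by (auto simp: pideal_iff)
    ultimately show ?thesis
      using y(2) False val_unit_factorization exponent_le_if_unit_factorization by auto
  qed
qed

end

section \<open>Digit expansions and the order of the ring\<close>

definition revlex_less :: "nat \<Rightarrow> (nat \<Rightarrow> nat) \<Rightarrow> (nat \<Rightarrow> nat) \<Rightarrow> bool" where
  "revlex_less s f h \<longleftrightarrow> (\<exists>i<s. f i < h i \<and> (\<forall>j. i < j \<and> j < s \<longrightarrow> f j = h j))"

lemma revlex_less_irrefl: "\<not> revlex_less s f f"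
  unfolding revlex_less_def by auto

lemma revlex_less_trans:
  assumes "revlex_less s f h" and "revlex_less s h k"
  shows "revlex_less s f k"
proof -
  obtain i where i: "i < s" "f i < h i" "\<forall>j. i < j \<and> j < s \<longrightarrow> f j = h j"
    using assms(1) unfolding revlex_less_def by blast
  obtain i' where i': "i' < s" "h i' < k i'" "\<forall>j. i' < j \<and> j < s \<longrightarrow> h j = k j"
    using assms(2) unfolding revlex_less_def by blast
  show ?thesis
    unfolding revlex_less_def
    using i i' by (cases i i' rule: linorder_cases) (auto intro!: exI[of _ "max i i'"])
qed

lemma revlex_less_total:
  assumes "\<exists>i<s. f i \<noteq> h i"
  shows "revlex_less s f h \<or> revlex_less s h f"
proof -
  define D where "D = {i. i < s \<and> f i \<noteq> h i}"
  define i where "i = Max D"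
  have D: "finite D" "D \<noteq> {}"
    unfolding D_def using assms by auto
  have "i < s \<and> f i \<noteq> h i"
    using Max_in[OF D] unfolding i_def D_def by blast
  moreover have "\<forall>j. i < j \<and> j < s \<longrightarrow> f j = h j"
    using Max_ge[OF D(1)] unfolding i_def D_def by fastforce
  ultimately show ?thesis
    unfolding revlex_less_def by (metis linorder_neqE_nat)
qed

fun horner :: "'a::comm_ring_1 \<Rightarrow> 'a list \<Rightarrow> 'a" where
  "horner g [] = 0"
| "horner g (t # ds) = t + g * horner g ds"

lemma horner_eq_sum: "horner g ds = (\<Sum>i<length ds. ds ! i * g ^ i)"
proof (induction ds)
  case Nil
  then show ?case by simp
next
  case (Cons t ds)
  have "(\<Sum>i<length (t # ds). (t # ds) ! i * g ^ i) = t + (\<Sum>i<length ds. ds ! i * g ^ Suc i)"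
    unfolding length_Cons sum.lessThan_Suc_shift by simp
  also have "\<dots> = t + g * horner g ds"
    by (simp add: Cons sum_distrib_left ac_simps)
  finally show ?case
    by simp
qed

context chain_ring
begin

lemma T_distinct: "distinct T"
proof -
  have "0 \<in> pideal g"
    using mult_in_pideal[of g 0] by simp
  then show ?thesis
    using reps unfolding coset_reps_def distinct_conv_nth by (metis right_minus_eq)
qed

lemma tidx_nth:
  assumes "t \<in> set T"
  shows "tidx T t < length T \<and> T ! tidx T t = t"
  unfolding tidx_def using distinct_Ex1[OF T_distinct assms] by (rule theI')

lemma tidx_inj: "t1 \<in> set T \<Longrightarrow> t2 \<in> set T \<Longrightarrow> tidx T t1 = tidx T t2 \<Longrightarrow> t1 = t2"
  using tidx_nth by metis

lemma reps_eq_if_congruent: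
  "t1 \<in> set T \<Longrightarrow> t2 \<in> set T \<Longrightarrow> t1 - t2 \<in> pideal g \<Longrightarrow> t1 = t2"
  using reps unfolding coset_reps_def in_set_conv_nth by metis

lemma horner_digits_exist: "\<exists>ds y. length ds = n \<and> set ds \<subseteq> set T \<and> x = horner g ds + g ^ n * y"
proof (induction n arbitrary: x)
  case 0
  show ?case
    by (intro exI[of _ "[]"] exI[of _ x]) simp
next
  case (Suc n)
  obtain t where t: "t \<in> set T" "x - t \<in> pideal g"
    using reps unfolding coset_reps_def by blast
  then obtain z where z: "x = t + g * z"
    by (auto simp: pideal_iff algebra_simps)
  obtain ds y where "length ds = n" "set ds \<subseteq> set T" "z = horner g ds + g ^ n * y"
    using Suc by blast
  then show ?case
    using t z by (intro exI[of _ "t # ds"] exI[of _ y]) (simp add: algebra_simps)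
qed

text \<open>Two digit strings of length \<open>n \<le> s\<close> whose values agree modulo \<open>g ^ n\<close>
  (i.e. up to the annihilator of \<open>g ^ (s - n)\<close>) coincide; induction peels off the lowest digit.\<close>
lemma digits_eq_if_annihilated:
  assumes "length ds = n" "length es = n" "n \<le> s" "set ds \<subseteq> set T" "set es \<subseteq> set T"
    and "g ^ (s - n) * (horner g ds - horner g es) = 0"
  shows "ds = es"
  using assms
proof (induction ds arbitrary: es n)
  case Nil
  then show ?case by simp
next
  case (Cons t ds)
  obtain t' es' where es: "es = t' # es'"
    using Cons.prems(1,2) by (cases es) auto
  obtain n' where n: "n = Suc n'"
    using Cons.prems(1) by auto
  have eq: "g ^ (s - n) * ((t - t') + g * (horner g ds - horner g es')) = 0"
    using Cons.prems(6) es by (simp add: algebra_simps)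
  have "t = t'"
  proof (rule ccontr)
    assume "t \<noteq> t'"
    then have "t - t' \<notin> pideal g"
      using reps_eq_if_congruent Cons.prems(4,5) es by auto
    then have "((t - t') + g * (horner g ds - horner g es')) dvd 1"
      by (intro unit_add_pideal unit_if_notin_pideal mult_in_pideal)
    then have "g ^ (s - n) = 0"
      using eq by (rule unit_mult_eq_zero)
    then show False
      using power_ne_zero_below[of "s - n"] Cons.prems(3) n by simp
  qed
  have "s - n' = Suc (s - n)"
    using Cons.prems(3) n by simp
  then have "g ^ (s - n') * (horner g ds - horner g es') = 0"
    using eq \<open>t = t'\<close> by (simp add: ac_simps)
  then have "ds = es'"
    using Cons.IH[of n' es'] Cons.prems es n by simp
  then show ?case
    using es \<open>t = t'\<close> by simp
qed

lemma digits_unique: "\<exists>!ds. length ds = s \<and> set ds \<subseteq> set T \<and> x = (\<Sum>i<s. ds ! i * g ^ i)"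
proof -
  obtain ds y where ds: "length ds = s" "set ds \<subseteq> set T" "x = horner g ds + g ^ s * y"
    using horner_digits_exist by blast
  show ?thesis
  proof (rule ex1I[of _ ds])
    show "length ds = s \<and> set ds \<subseteq> set T \<and> x = (\<Sum>i<s. ds ! i * g ^ i)"
      using ds nil by (simp add: horner_eq_sum)
    show "es = ds" if "length es = s \<and> set es \<subseteq> set T \<and> x = (\<Sum>i<s. es ! i * g ^ i)" for es
      using digits_eq_if_annihilated[of es s ds] that ds nil by (simp add: horner_eq_sum)
  qed
qed

lemma digits_spec:
  "length (digits g s T x) = s" "set (digits g s T x) \<subseteq> set T" "horner g (digits g s T x) = x"
  using theI'[OF digits_unique[of x]] unfolding digits_def[symmetric]
  by (auto simp: horner_eq_sum)

lemma digits_horner: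
  assumes "length ds = s" and "set ds \<subseteq> set T"
  shows "digits g s T (horner g ds) = ds"
  unfolding digits_def using assms
  by (intro the1_equality[OF digits_unique]) (simp add: horner_eq_sum)

lemma card_UNIV_eq_power: "card (UNIV :: 'a set) = length T ^ s"
proof -
  have "bij_betw (digits g s T) UNIV {ds. set ds \<subseteq> set T \<and> length ds = s}"
    by (rule bij_betw_byWitness[of _ "horner g"]) (use digits_spec digits_horner in auto)
  then have "card (UNIV :: 'a set) = card {ds. set ds \<subseteq> set T \<and> length ds = s}"
    by (rule bij_betw_same_card)
  also have "\<dots> = length T ^ s"
    using T_distinct by (simp add: card_lists_length_eq distinct_card)
  finally show ?thesis .
qed

definition digit_index :: "'a \<Rightarrow> nat \<Rightarrow> nat" where
  "digit_index x i = tidx T (digits g s T x ! i)"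

lemma digit_in_T: "i < s \<Longrightarrow> digits g s T x ! i \<in> set T"
  using digits_spec(1,2)[of x] by (metis nth_mem subsetD)

lemma digit_index_inj:
  assumes "\<forall>i<s. digit_index x i = digit_index y i"
  shows "x = y"
proof -
  have "digits g s T x = digits g s T y"
    using assms digits_spec(1) digit_in_T tidx_inj unfolding digit_index_def
    by (metis nth_equalityI)
  then show ?thesis
    using digits_spec(3) by metis
qed

lemma ring_less_iff_revlex:
  "ring_less g s T x y \<longleftrightarrow> revlex_less s (digit_index x) (digit_index y)"
  unfolding ring_less_def revlex_less_def Let_def digit_index_def
  by (metis digit_in_T less_irrefl tidx_inj)

lemma ring_less_irrefl: "\<not> ring_less g s T x x"
  by (simp add: ring_less_iff_revlex revlex_less_irrefl)

lemma ring_less_trans: "ring_less g s T x y \<Longrightarrow> ring_less g s T y z \<Longrightarrow> ring_less g s T x z"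
  unfolding ring_less_iff_revlex by (rule revlex_less_trans)

lemma ring_less_total:
  assumes "x \<noteq> y"
  shows "ring_less g s T x y \<or> ring_less g s T y x"
  unfolding ring_less_iff_revlex using digit_index_inj assms by (intro revlex_less_total) blast

definition rank :: "'a \<Rightarrow> nat" where
  "rank r = card {y. ring_less g s T y r}"

lemma rank_strict_mono:
  assumes "ring_less g s T x y"
  shows "rank x < rank y"
proof -
  have "{z. ring_less g s T z x} \<subset> {z. ring_less g s T z y}"
    using assms ring_less_trans ring_less_irrefl by blast
  then show ?thesis
    unfolding rank_def by (simp add: psubset_card_mono)
qed

lemma inj_rank: "inj rank"
  by (rule injI) (metis ring_less_total rank_strict_mono less_irrefl)

lemma rank_less_card: "rank x < card (UNIV :: 'a set)"
  unfolding rank_def by (intro psubset_card_mono) (use ring_less_irrefl in auto)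

lemma rho_rank: "rho g s T (rank r) = r"
  unfolding rho_def rank_def[symmetric]
  by (rule the_equality) (simp_all add: inj_rank inj_eq)

lemma set_rho_list: "set (rho_list g s T) = UNIV"
proof -
  have "r \<in> rho g s T ` {0..<length T ^ s}" for r
    using rho_rank[of r] rank_less_card[of r] card_UNIV_eq_power by force
  then show ?thesis
    unfolding rho_list_def by auto
qed

end

section \<open>The generator matrix\<close>

lemma nth_concat_uniform:
  assumes "\<forall>xs\<in>set xss. length xs = M" and "p < length xss * M"
  shows "concat xss ! p = xss ! (p div M) ! (p mod M)"
  using assms
proof (induction xss arbitrary: p)
  case Nil
  then show ?case by simp
next
  case (Cons xs xss)
  show ?case
  proof (cases "p < M")
    case True
    then show ?thesis using Cons.prems by (simp add: nth_append)
  next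
    case False
    have M: "0 < M" "M \<le> p"
      using Cons.prems(2) False by (cases M; simp)+
    have "concat (xs # xss) ! p = concat xss ! (p - M)"
      using Cons.prems False by (simp add: nth_append)
    also have "\<dots> = xss ! ((p - M) div M) ! ((p - M) mod M)"
      using Cons False by simp
    also have "\<dots> = (xs # xss) ! (p div M) ! (p mod M)"
      using M by (simp add: le_div_geq le_mod_geq)
    finally show ?thesis .
  qed
qed

lemma length_Gmat: "length (Gmat g s T k) = k"
  by (induction g s T k rule: Gmat.induct) auto

lemma length_Gmat_row: "i < k \<Longrightarrow> length (Gmat g s T k ! i) = length T ^ (s * k)"
proof (induction g s T k arbitrary: i rule: Gmat.induct)
  case (1 g s T)
  then show ?case by simp
next
  case (2 g s T)
  then show ?case by (simp add: rho_list_def)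
next
  case (3 g s T k)
  then show ?case
    by (cases i)
      (simp_all add: length_Gmat length_concat comp_def sum_list_triv sum_list_replicate
        rho_list_def power_add)
qed

lemma Gmat_Suc_Suc_nth_0:
  assumes "p < length T ^ (s * Suc (Suc k))"
  shows "Gmat g s T (Suc (Suc k)) ! 0 ! p = rho_list g s T ! (p div length T ^ (s * Suc k))"
proof -
  let ?M = "length T ^ (s * Suc k)"
  have p: "p < length (rho_list g s T) * ?M"
    using assms by (simp add: rho_list_def power_add)
  then have "0 < ?M"
    by (metis gr0I mult_0_right not_less_zero)
  then have "p div ?M < length (rho_list g s T)" "p mod ?M < ?M"
    using p by (simp_all add: less_mult_imp_div_less)
  then show ?thesis
    using p by (simp add: nth_concat_uniform[where M = ?M])
qed

lemma Gmat_Suc_Suc_nth_Suc: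
  assumes "p < length T ^ (s * Suc (Suc k))" and "i < Suc k"
  shows "Gmat g s T (Suc (Suc k)) ! Suc i ! p = Gmat g s T (Suc k) ! i ! (p mod length T ^ (s * Suc k))"
proof -
  let ?M = "length T ^ (s * Suc k)" and ?row = "Gmat g s T (Suc k) ! i"
  have len: "\<forall>xs\<in>set (replicate (length T ^ s) ?row). length xs = ?M"
    using length_Gmat_row[OF assms(2), of g s T] by simp
  have p: "p < length (replicate (length T ^ s) ?row) * ?M"
    using assms(1) by (simp add: power_add)
  then have "p div ?M < length T ^ s"
    by (simp add: less_mult_imp_div_less)
  then have "concat (replicate (length T ^ s) ?row) ! p = ?row ! (p mod ?M)"
    using nth_concat_uniform[OF len p] by simp
  then show ?thesis
    using assms(2) by (simp add: length_Gmat)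
qed

definition Gmat_col :: "'a::comm_ring_1 \<Rightarrow> nat \<Rightarrow> 'a list \<Rightarrow> nat \<Rightarrow> nat \<Rightarrow> 'a list" where
  "Gmat_col g s T k p = map (\<lambda>i. Gmat g s T k ! i ! p) [0..<k]"

lemma length_Gmat_col: "length (Gmat_col g s T k p) = k"
  by (simp add: Gmat_col_def)

lemma Gmat_col_Suc_Suc:
  assumes "p < length T ^ (s * Suc (Suc k))"
  shows "Gmat_col g s T (Suc (Suc k)) p
    = rho_list g s T ! (p div length T ^ (s * Suc k)) # Gmat_col g s T (Suc k) (p mod length T ^ (s * Suc k))"
  unfolding Gmat_col_def map_upt_Suc[of _ "Suc k"]
  using Gmat_Suc_Suc_nth_0[OF assms] Gmat_Suc_Suc_nth_Suc[OF assms] by simp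

lemma sum_delta_mult:
  fixes b :: "'a::comm_ring_1" and i k :: nat
  assumes "i < k"
  shows "(\<Sum>j<k. (if j = i then b else 0) * x j) = b * x i"
proof -
  have "(\<Sum>j<k. (if j = i then b else 0) * x j) = (\<Sum>j<k. if j = i then b * x j else 0)"
    by (rule sum.cong) simp_all
  also have "\<dots> = b * x i"
    using assms by simp
  finally show ?thesis .
qed

lemma scaled_Gmat_row:
  assumes "i < k"
  shows "map (\<lambda>x. b * x) (Gmat g s T k ! i)
    = map (\<lambda>p. \<Sum>j<k. (if j = i then b else 0) * Gmat g s T k ! j ! p) [0..<length T ^ (s * k)]"
  using assms length_Gmat_row[OF assms, of g s T] by (intro nth_equalityI) (simp_all add: sum_delta_mult)

lemma lin_form_single_image:
  assumes "i < k"
  shows "lin_form (\<lambda>j. if j = i then b else 0) ` {xs. length xs = k} = pideal b"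
proof -
  have "lin_form (\<lambda>j. if j = i then b else 0) xs = b * xs ! i" if "length xs = k" for xs
    using assms that by (simp add: lin_form_def sum_delta_mult)
  moreover have "b * r = b * replicate k r ! i" for r
    using assms by simp
  ultimately show ?thesis
    unfolding pideal_def by (auto intro!: image_eqI[of _ _ "replicate k _"])
qed

context chain_ring
begin

lemma rho_list_enumerates:
  obtains j where "j < length T ^ s" and "rho_list g s T ! j = r"
proof -
  have "r \<in> set (rho_list g s T)"
    using set_rho_list by simp
  then obtain j where "j < length (rho_list g s T)" "rho_list g s T ! j = r"
    by (auto simp: in_set_conv_nth)
  then show ?thesis
    using that by (simp add: rho_list_def)
qed

lemma Gmat_col_surj:
  assumes "length xs = Suc k"
  shows "\<exists>p < length T ^ (s * Suc k). Gmat_col g s T (Suc k) p = xs"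
  using assms
proof (induction k arbitrary: xs)
  case 0
  then obtain r where xs: "xs = [r]"
    by (auto simp: length_Suc_conv)
  obtain j where "j < length T ^ s" "rho_list g s T ! j = r"
    by (rule rho_list_enumerates)
  then show ?case
    using xs by (intro exI[of _ j]) (simp add: Gmat_col_def)
next
  case (Suc k)
  let ?M = "length T ^ (s * Suc k)"
  obtain r ys where xs: "xs = r # ys" "length ys = Suc k"
    using Suc.prems by (auto simp: length_Suc_conv)
  obtain p' where p': "p' < ?M" "Gmat_col g s T (Suc k) p' = ys"
    using Suc.IH xs(2) by blast
  obtain j where j: "j < length T ^ s" "rho_list g s T ! j = r"
    by (rule rho_list_enumerates)
  have "j * ?M + p' < Suc j * ?M"
    using p'(1) by simp
  also have "\<dots> \<le> length T ^ s * ?M"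
    using j(1) by (intro mult_right_mono) simp_all
  finally have "j * ?M + p' < length T ^ (s * Suc (Suc k))"
    by (simp add: power_add)
  moreover have "?M \<noteq> 0"
    using p'(1) by linarith
  then have "(j * ?M + p') div ?M = j" "(j * ?M + p') mod ?M = p'"
    using p'(1) by simp_all
  ultimately show ?case
    using j p' xs by (intro exI[of _ "j * ?M + p'"]) (simp add: Gmat_col_Suc_Suc)
qed

lemma mset_Gmat_cols:
  assumes "1 \<le> k"
  shows "mset (map (Gmat_col g s T k) [0..<length T ^ (s * k)]) = mset_set {xs. length xs = k}"
proof -
  have image: "Gmat_col g s T k ` {0..<length T ^ (s * k)} = {xs. length xs = k}"
    using Gmat_col_surj[of _ "k - 1"] assms by (force simp: length_Gmat_col)
  have "card {xs :: 'a list. length xs = k} = length T ^ (s * k)"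
    using card_lists_length_eq[of "UNIV :: 'a set" k] by (simp add: card_UNIV_eq_power power_mult)
  then have "inj_on (Gmat_col g s T k) {0..<length T ^ (s * k)}"
    by (intro eq_card_imp_inj_on) (simp_all add: image)
  then have "distinct (map (Gmat_col g s T k) [0..<length T ^ (s * k)])"
    by (simp add: distinct_map)
  then have "mset_set (set (map (Gmat_col g s T k) [0..<length T ^ (s * k)]))
      = mset (map (Gmat_col g s T k) [0..<length T ^ (s * k)])"
    by (rule mset_set_set)
  then show ?thesis
    using image by simp
qed

lemma mset_codeword:
  assumes "1 \<le> k"
  shows "mset (map (\<lambda>p. \<Sum>i<k. a i * Gmat g s T k ! i ! p) [0..<length T ^ (s * k)])
    = image_mset (lin_form a) (mset_set {xs. length xs = k})"
proof -
  have "(\<Sum>i<k. a i * Gmat g s T k ! i ! p) = lin_form a (Gmat_col g s T k p)" for p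
    by (simp add: lin_form_def length_Gmat_col Gmat_col_def)
  then have "map (\<lambda>p. \<Sum>i<k. a i * Gmat g s T k ! i ! p) [0..<length T ^ (s * k)]
      = map (lin_form a) (map (Gmat_col g s T k) [0..<length T ^ (s * k)])"
    by simp
  then show ?thesis
    using mset_Gmat_cols[OF assms] by (simp del: map_map)
qed

lemma mset_scaled_Gmat_row:
  assumes "i < k"
  shows "mset (map (\<lambda>x. b * x) (Gmat g s T k ! i))
    = image_mset (lin_form (\<lambda>j. if j = i then b else 0)) (mset_set {xs. length xs = k})"
  unfolding scaled_Gmat_row[OF assms] using assms by (intro mset_codeword) simp

lemma codeword_value_ideal:
  assumes "mset c = image_mset (lin_form a) (mset_set {xs. length xs = k})" and "\<exists>x\<in>set c. x \<noteq> 0"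
  shows "lin_form a ` {xs. length xs = k} = pideal (g ^ the_enat (vval g c))"
proof -
  have set_c: "set c = lin_form a ` {xs. length xs = k}"
    using arg_cong[OF assms(1), of set_mset] by (simp add: finite_lists_length)
  then have "lin_form a ` {xs. length xs = k} \<noteq> {0}"
    using assms(2) by auto
  then obtain n where n: "lin_form a ` {xs. length xs = k} = pideal (g ^ n)" "g ^ n \<noteq> 0"
    using ideal_eq_pideal_power is_ideal_lin_form_image by blast
  then have "vval g c = enat n"
    using set_c by (simp add: vval_eq_if_set_eq_pideal)
  then show ?thesis
    using n(1) by simp
qed

end

theorem proposition3p9:
  fixes g :: "'a::{comm_ring_1,finite}" and s k :: nat and T c :: "'a list"
  assumes chain: "\<forall>I J :: 'a set. is_ideal I \<and> is_ideal J \<longrightarrow> I \<subseteq> J \<or> J \<subseteq> I"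
    and maxid: "maximal_ideal (pideal g)"
    and nil: "g ^ s = 0" and nil': "g ^ (s - 1) \<noteq> 0"
    and reps: "coset_reps g T"
    and k: "k \<ge> 1"
    and cS: "c \<in> S_mod g s T k"
    and cnz: "c \<noteq> replicate (length T ^ (s * k)) 0"
  shows "\<forall>i\<in>{1..k}. mset c =
           mset (map (\<lambda>x. g ^ the_enat (vval g c) * x) (Gmat g s T k ! (i - 1)))"
proof
  interpret chain_ring g s T
    using chain maxid nil nil' reps by unfold_locales
  obtain a where c: "c = map (\<lambda>p. \<Sum>i<k. a i * Gmat g s T k ! i ! p) [0..<length T ^ (s * k)]"
    using cS unfolding S_mod_def by blast
  have mset_c: "mset c = image_mset (lin_form a) (mset_set {xs. length xs = k})"
    unfolding c using k by (rule mset_codeword)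
  have "\<exists>x\<in>set c. x \<noteq> 0"
    using cnz c replicate_length_same[of c 0] by auto
  with mset_c have image: "lin_form a ` {xs. length xs = k} = pideal (g ^ the_enat (vval g c))"
    by (rule codeword_value_ideal)
  fix i assume "i \<in> {1..k}"
  then have i: "i - 1 < k"
    by auto
  have "mset (map (\<lambda>x. g ^ the_enat (vval g c) * x) (Gmat g s T k ! (i - 1)))
      = image_mset (lin_form (\<lambda>j. if j = i - 1 then g ^ the_enat (vval g c) else 0))
          (mset_set {xs. length xs = k})"
    using i by (rule mset_scaled_Gmat_row)
  also have "\<dots> = mset c"
    unfolding mset_c using lin_form_single_image[OF i] image by (intro lin_form_values_eq) simp
  finally show "mset c = mset (map (\<lambda>x. g ^ the_enat (vval g c) * x) (Gmat g s T k ! (i - 1)))"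
    by simp
qed

end
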